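(* Let $N$ be a fuzzy negation and let $D_\top$ be the greatest disjunctor, $D_\top(0,0)=0$ and $D_\top(x,y)=1$ otherwise. Then the $(A,N)$-implication $I_{D_\top,N}(x,y)=D_\top(N(x),y)$ does not satisfy (A5) with any aggregation function.
   Context: Aggregation function: $A:[0,1]^2\to[0,1]$ non-decreasing in each variable with $A(0,0)=0$, $A(1,1)=1$. Fuzzy negation: non-increasing $N:[0,1]\to[0,1]$ with $N(0)=1$, $N(1)=0$. A fuzzy set on a nonempty set $U$ is a map $U\to[0,1]$, normal if it attains $1$. "$I$ satisfies (A5) with $A$": for all nonempty sets $U,V$, all normal fuzzy sets $D$ on $U$, $B$ on $V$ and every $y\in V$, $\sup_{x\in U}A(D(x),I(D(x),B(y)))=B(y)$. *)

theory Defs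
  imports Complex_Main
begin

definition aggregation_function :: "(real \<Rightarrow> real \<Rightarrow> real) \<Rightarrow> bool" where
  "aggregation_function A \<longleftrightarrow>
     (\<forall>x\<in>{0..1}. \<forall>y\<in>{0..1}. A x y \<in> {0..1}) \<and>
     (\<forall>x\<in>{0..1}. \<forall>x'\<in>{0..1}. \<forall>y\<in>{0..1}. x \<le> x' \<longrightarrow> A x y \<le> A x' y) \<and>
     (\<forall>x\<in>{0..1}. \<forall>y\<in>{0..1}. \<forall>y'\<in>{0..1}. y \<le> y' \<longrightarrow> A x y \<le> A x y') \<and>
     A 0 0 = 0 \<and> A 1 1 = 1"

definition fuzzy_negation :: "(real \<Rightarrow> real) \<Rightarrow> bool" where
  "fuzzy_negation N \<longleftrightarrow>
     (\<forall>x\<in>{0..1}. N x \<in> {0..1}) \<and>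
     (\<forall>x\<in>{0..1}. \<forall>y\<in>{0..1}. x \<le> y \<longrightarrow> N y \<le> N x) \<and>
     N 0 = 1 \<and> N 1 = 0"

definition D_top :: "real \<Rightarrow> real \<Rightarrow> real" where
  "D_top x y = (if x = 0 \<and> y = 0 then 0 else 1)"

definition AN_implication :: "(real \<Rightarrow> real \<Rightarrow> real) \<Rightarrow> (real \<Rightarrow> real) \<Rightarrow> real \<Rightarrow> real \<Rightarrow> real" where
  "AN_implication D N x y = D (N x) y"

definition fuzzy_set_on :: "'a set \<Rightarrow> ('a \<Rightarrow> real) \<Rightarrow> bool" where
  "fuzzy_set_on U D \<longleftrightarrow> (\<forall>x\<in>U. D x \<in> {0..1})"

definition normal_fuzzy_set_on :: "'a set \<Rightarrow> ('a \<Rightarrow> real) \<Rightarrow> bool" where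
  "normal_fuzzy_set_on U D \<longleftrightarrow> fuzzy_set_on U D \<and> (\<exists>x\<in>U. D x = 1)"

definition A5_on :: "'a set \<Rightarrow> 'b set \<Rightarrow> (real \<Rightarrow> real \<Rightarrow> real) \<Rightarrow> (real \<Rightarrow> real \<Rightarrow> real) \<Rightarrow> bool" where
  "A5_on U V I A \<longleftrightarrow>
     (\<forall>D B y. normal_fuzzy_set_on U D \<longrightarrow> normal_fuzzy_set_on V B \<longrightarrow> y \<in> V \<longrightarrow>
        (SUP x\<in>U. A (D x) (I (D x) (B y))) = B y)"

definition satisfies_A5 :: "'u itself \<Rightarrow> 'v itself \<Rightarrow> (real \<Rightarrow> real \<Rightarrow> real) \<Rightarrow> (real \<Rightarrow> real \<Rightarrow> real) \<Rightarrow> bool" where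
  "satisfies_A5 TU TV I A \<longleftrightarrow>
     (\<forall>(U::'u set) (V::'v set). U \<noteq> {} \<longrightarrow> V \<noteq> {} \<longrightarrow> A5_on U V I A)"

end

theory Submission
  imports Defs
begin

text \<open>Since \<open>N 1 = 0\<close> and \<open>D_top 0 b = 1\<close> for every \<open>b > 0\<close>, the implication
  \<open>I_{D_top,N}\<close> is constantly 1 on \<open>{1} \<times> (0,1]\<close>. For the constant fuzzy set
  \<open>D = 1\<close> the supremum in (A5) is therefore \<open>A 1 1 = 1\<close>, whereas \<open>B y\<close> may be
  any value in \<open>(0,1)\<close> as soon as \<open>V\<close> has two points.\<close>

lemma AN_implication_D_top_one_left:
  assumes "N 1 = 0" and "b \<noteq> 0"
  shows "AN_implication D_top N 1 b = 1"
  using assms by (simp add: AN_implication_def D_top_def)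

lemma not_A5_on_AN_implication_D_top:
  assumes "N 1 = 0" and "A 1 1 = 1"
    and "U \<noteq> {}" and "v \<in> V" and "w \<in> V" and "v \<noteq> w"
  shows "\<not> A5_on U V (AN_implication D_top N) A"
proof
  assume A5: "A5_on U V (AN_implication D_top N) A"
  define B where "B = (\<lambda>x. if x = v then 1 else 1 / 2 :: real)"
  have "B w = 1 / 2"
    using \<open>v \<noteq> w\<close> by (simp add: B_def)
  have "normal_fuzzy_set_on U (\<lambda>_. 1 :: real)"
    using \<open>U \<noteq> {}\<close> by (auto simp: normal_fuzzy_set_on_def fuzzy_set_on_def)
  moreover have "normal_fuzzy_set_on V B"
    using \<open>v \<in> V\<close> by (auto simp: normal_fuzzy_set_on_def fuzzy_set_on_def B_def)
  ultimately have "(SUP x\<in>U. A 1 (AN_implication D_top N 1 (B w))) = B w"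
    using A5 \<open>w \<in> V\<close> unfolding A5_on_def by blast
  also have "A 1 (AN_implication D_top N 1 (B w)) = 1"
    using assms(1,2) \<open>B w = 1 / 2\<close> by (simp add: AN_implication_D_top_one_left)
  finally show False
    using \<open>U \<noteq> {}\<close> \<open>B w = 1 / 2\<close> by simp
qed

theorem proposition4p11:
  assumes "fuzzy_negation N"
  shows "\<not> (\<exists>A. aggregation_function A \<and>
             satisfies_A5 TYPE(nat) TYPE(nat) (AN_implication D_top N) A)"
proof
  assume "\<exists>A. aggregation_function A \<and>
             satisfies_A5 TYPE(nat) TYPE(nat) (AN_implication D_top N) A"
  then obtain A where aggregation: "aggregation_function A"
    and A5: "satisfies_A5 TYPE(nat) TYPE(nat) (AN_implication D_top N) A" by blast
  have "A5_on {0::nat} {0::nat, 1} (AN_implication D_top N) A"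
    using A5 unfolding satisfies_A5_def by (metis insert_not_empty)
  moreover have "N 1 = 0" using assms by (simp add: fuzzy_negation_def)
  moreover have "A 1 1 = 1" using aggregation by (simp add: aggregation_function_def)
  ultimately show False
    using not_A5_on_AN_implication_D_top[of N A "{0::nat}" 0 "{0::nat, 1}" 1] by simp
qed

end
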